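(* Let $G$ be a finite abelian group and $V\in{}^{G}_{G}\mathcal{YD}$ of finite Cartan type with each $q_{ii}$ of odd order and of order coprime to $3$ whenever $i$ lies in a component of type $G_2$, and with the basis $x_1,\dots,x_\theta$ ordered so that $(a_{ij})$ is block diagonal with each block the Cartan matrix of a connected Dynkin diagram. Let $N_i=\mathrm{ord}(q_{ii})$ and $S_{\mathrm{ord}}=TV/(\mathrm{ad}_{\mathrm{sk}}(x_i)(x_j):i<j)$, $s_{\mathrm{ord}}=TV/(\mathrm{ad}_{\mathrm{sk}}(x_i)(x_j)\ (i<j),\ x_i^{N_i}\ (\text{all }i))$. Then the projections $TV\to S_{\mathrm{ord}}$ and $TV\to s_{\mathrm{ord}}$ factor to give surjections $R^{\mathrm{pre}}\to S_{\mathrm{ord}}$ and $B(V)\to s_{\mathrm{ord}}$ respectively.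
   Context: ${}^{G}_{G}\mathcal{YD}$: Yetter–Drinfeld modules over $G$. $V$ has homogeneous basis $x_i$ of $G$-degree $g_i$ with $g\cdot x_i=\chi_i(g)x_i$; $q_{ij}=\chi_j(g_i)$. Cartan type: an integer matrix $(a_{ij})$ with $a_{ii}=2$, $0\le -a_{ij}<\mathrm{ord}(q_{ii})$ ($i\ne j$), $q_{ij}q_{ji}=q_{ii}^{a_{ij}}$; finite Cartan type: the Nichols algebra $B(V)$ is finite-dimensional. For homogeneous $y$, $\mathrm{ad}_{\mathrm{sk}}(x_i)(y)=x_iy-(g_i\cdot y)x_i$, so $\mathrm{ad}_{\mathrm{sk}}(x_i)(x_j)=x_ix_j-q_{ij}x_jx_i$. $R^{\mathrm{pre}}=TV/(\mathrm{ad}_{\mathrm{sk}}(x_i)^{1-a_{ij}}(x_j):i\neq j)$. *)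

theory Defs
  imports Complex_Main "HOL-Combinatorics.Permutations"
begin

text \<open>Noncommutative polynomials in x_0,...,x_{theta-1} (the tensor algebra TV) are
represented as coefficient functions on words (lists of indices).\<close>

type_synonym 'k ncpoly = "nat list \<Rightarrow> 'k"

definition TV :: "nat \<Rightarrow> ('k::field) ncpoly set" where
  "TV \<theta> = {f. finite {w. f w \<noteq> 0} \<and> {w. f w \<noteq> 0} \<subseteq> lists {..<\<theta>}}"

definition mon :: "nat list \<Rightarrow> ('k::field) ncpoly" where
  "mon u = (\<lambda>w. if w = u then 1 else 0)"

definition X :: "nat \<Rightarrow> ('k::field) ncpoly" where
  "X i = mon [i]"

definition ncmult :: "('k::field) ncpoly \<Rightarrow> 'k ncpoly \<Rightarrow> 'k ncpoly" (infixl "\<cdot>\<^sub>T" 70) where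
  "f \<cdot>\<^sub>T h = (\<lambda>w. \<Sum>k\<le>length w. f (take k w) * h (drop k w))"

definition ncadd :: "('k::field) ncpoly \<Rightarrow> 'k ncpoly \<Rightarrow> 'k ncpoly" where
  "ncadd f h = (\<lambda>w. f w + h w)"

definition ncsub :: "('k::field) ncpoly \<Rightarrow> 'k ncpoly \<Rightarrow> 'k ncpoly" where
  "ncsub f h = (\<lambda>w. f w - h w)"

definition ncscale :: "'k::field \<Rightarrow> 'k ncpoly \<Rightarrow> 'k ncpoly" where
  "ncscale c f = (\<lambda>w. c * f w)"

inductive_set ideal_gen :: "nat \<Rightarrow> ('k::field) ncpoly set \<Rightarrow> 'k ncpoly set"
  for \<theta> :: nat and S :: "'k ncpoly set" where
  zero: "(\<lambda>w. 0) \<in> ideal_gen \<theta> S"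
| gen: "s \<in> S \<Longrightarrow> s \<in> ideal_gen \<theta> S"
| add: "f \<in> ideal_gen \<theta> S \<Longrightarrow> h \<in> ideal_gen \<theta> S \<Longrightarrow> ncadd f h \<in> ideal_gen \<theta> S"
| scale: "f \<in> ideal_gen \<theta> S \<Longrightarrow> ncscale c f \<in> ideal_gen \<theta> S"
| lmult: "f \<in> ideal_gen \<theta> S \<Longrightarrow> u \<in> lists {..<\<theta>} \<Longrightarrow> mon u \<cdot>\<^sub>T f \<in> ideal_gen \<theta> S"
| rmult: "f \<in> ideal_gen \<theta> S \<Longrightarrow> u \<in> lists {..<\<theta>} \<Longrightarrow> f \<cdot>\<^sub>T mon u \<in> ideal_gen \<theta> S"

text \<open>Action of the group element g on TV: x_i has character chi_i, extended multiplicatively.\<close>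
definition gact :: "(nat \<Rightarrow> 'g \<Rightarrow> 'k::field) \<Rightarrow> 'g \<Rightarrow> 'k ncpoly \<Rightarrow> 'k ncpoly" where
  "gact \<chi> g f = (\<lambda>w. (\<Prod>k<length w. \<chi> (w ! k) g) * f w)"

definition ad_sk :: "(nat \<Rightarrow> 'g) \<Rightarrow> (nat \<Rightarrow> 'g \<Rightarrow> 'k::field) \<Rightarrow> nat \<Rightarrow> 'k ncpoly \<Rightarrow> 'k ncpoly" where
  "ad_sk g \<chi> i y = ncsub (X i \<cdot>\<^sub>T y) (gact \<chi> (g i) y \<cdot>\<^sub>T X i)"

text \<open>Multiplicative order of a field element (0 if infinite).\<close>
definition mord :: "'k::field \<Rightarrow> nat" where
  "mord z = (if \<exists>n>0. z ^ n = 1 then (LEAST n. n > 0 \<and> z ^ n = 1) else 0)"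

text \<open>Quantum symmetrizer for the diagonal braiding c(x_i \<otimes> x_j) = q_ij x_j \<otimes> x_i,
q_ij = chi_j(g_i), applied to a word u: sum over sigma in S_n of the braid lift of sigma.\<close>
definition qsym_word :: "(nat \<Rightarrow> 'g) \<Rightarrow> (nat \<Rightarrow> 'g \<Rightarrow> 'k::field) \<Rightarrow> nat list \<Rightarrow> 'k ncpoly" where
  "qsym_word g \<chi> u = (\<lambda>w. \<Sum>\<sigma> \<in> {\<sigma>. \<sigma> permutes {..<length u}}.
      if map (\<lambda>p. u ! (inv \<sigma> p)) [0..<length u] = w
      then (\<Prod>(a,b) \<in> {(a,b). a < b \<and> b < length u \<and> \<sigma> b < \<sigma> a}. \<chi> (u ! b) (g (u ! a)))
      else 0)"

definition qsym :: "(nat \<Rightarrow> 'g) \<Rightarrow> (nat \<Rightarrow> 'g \<Rightarrow> 'k::field) \<Rightarrow> 'k ncpoly \<Rightarrow> 'k ncpoly" where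
  "qsym g \<chi> f = (\<lambda>w. \<Sum>u \<in> {u. f u \<noteq> 0}. f u * qsym_word g \<chi> u w)"

text \<open>Kernel of the projection TV -> B(V) (the Nichols ideal = kernel of quantum symmetrizer).\<close>
definition nichols_ideal :: "nat \<Rightarrow> (nat \<Rightarrow> 'g) \<Rightarrow> (nat \<Rightarrow> 'g \<Rightarrow> 'k::field) \<Rightarrow> 'k ncpoly set" where
  "nichols_ideal \<theta> g \<chi> = {f \<in> TV \<theta>. qsym g \<chi> f = (\<lambda>w. 0)}"

definition nichols_fin_dim :: "nat \<Rightarrow> (nat \<Rightarrow> 'g) \<Rightarrow> (nat \<Rightarrow> 'g \<Rightarrow> 'k::field) \<Rightarrow> bool" where
  "nichols_fin_dim \<theta> g \<chi> \<longleftrightarrow> (\<exists>F. finite F \<and> F \<subseteq> TV \<theta> \<and>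
     (\<forall>f \<in> TV \<theta>. \<exists>c. ncsub f (\<lambda>w. \<Sum>h\<in>F. c h * h w) \<in> nichols_ideal \<theta> g \<chi>))"

definition cartan_type :: "nat \<Rightarrow> (nat \<Rightarrow> 'g) \<Rightarrow> (nat \<Rightarrow> 'g \<Rightarrow> 'k::field) \<Rightarrow> (nat \<Rightarrow> nat \<Rightarrow> int) \<Rightarrow> bool" where
  "cartan_type \<theta> g \<chi> a \<longleftrightarrow>
     (\<forall>i<\<theta>. a i i = 2) \<and>
     (\<forall>i<\<theta>. \<forall>j<\<theta>. i \<noteq> j \<longrightarrow>
        0 \<le> - a i j \<and> - a i j < int (mord (\<chi> i (g i))) \<and>
        \<chi> j (g i) * \<chi> i (g j) = (\<chi> i (g i)) powi (a i j))"

definition finite_cartan_type :: "nat \<Rightarrow> (nat \<Rightarrow> 'g) \<Rightarrow> (nat \<Rightarrow> 'g \<Rightarrow> 'k::field) \<Rightarrow> (nat \<Rightarrow> nat \<Rightarrow> int) \<Rightarrow> bool" where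
  "finite_cartan_type \<theta> g \<chi> a \<longleftrightarrow> cartan_type \<theta> g \<chi> a \<and> nichols_fin_dim \<theta> g \<chi>"

text \<open>Generalized Cartan matrix of finite type (i.e. block sum of Cartan matrices of
Dynkin diagrams): symmetrizable with positive definite symmetrization.\<close>
definition finite_type_cartan_matrix :: "nat \<Rightarrow> (nat \<Rightarrow> nat \<Rightarrow> int) \<Rightarrow> bool" where
  "finite_type_cartan_matrix \<theta> a \<longleftrightarrow>
     (\<forall>i<\<theta>. a i i = 2) \<and> (\<forall>i<\<theta>. \<forall>j<\<theta>. i \<noteq> j \<longrightarrow> a i j \<le> 0 \<and> (a i j = 0 \<longleftrightarrow> a j i = 0)) \<and>
     (\<exists>d :: nat \<Rightarrow> real. (\<forall>i<\<theta>. d i > 0) \<and> (\<forall>i<\<theta>. \<forall>j<\<theta>. d i * a i j = d j * a j i) \<and>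
        (\<forall>x :: nat \<Rightarrow> real. (\<exists>i<\<theta>. x i \<noteq> 0) \<longrightarrow>
           (\<Sum>i<\<theta>. \<Sum>j<\<theta>. x i * d i * a i j * x j) > 0))"

definition dynkin_adj :: "nat \<Rightarrow> (nat \<Rightarrow> nat \<Rightarrow> int) \<Rightarrow> nat \<Rightarrow> nat \<Rightarrow> bool" where
  "dynkin_adj \<theta> a i j \<longleftrightarrow> i < \<theta> \<and> j < \<theta> \<and> i \<noteq> j \<and> a i j \<noteq> 0"

definition component :: "nat \<Rightarrow> (nat \<Rightarrow> nat \<Rightarrow> int) \<Rightarrow> nat \<Rightarrow> nat set" where
  "component \<theta> a i = {j. j < \<theta> \<and> (dynkin_adj \<theta> a)\<^sup>*\<^sup>* i j}"

text \<open>Block-diagonal ordering: every connected component is an interval of indices.\<close>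
definition block_diagonal :: "nat \<Rightarrow> (nat \<Rightarrow> nat \<Rightarrow> int) \<Rightarrow> bool" where
  "block_diagonal \<theta> a \<longleftrightarrow>
     (\<forall>i j k. i < j \<and> j < k \<and> k < \<theta> \<and> k \<in> component \<theta> a i \<longrightarrow> j \<in> component \<theta> a i)"

definition in_G2_component :: "nat \<Rightarrow> (nat \<Rightarrow> nat \<Rightarrow> int) \<Rightarrow> nat \<Rightarrow> bool" where
  "in_G2_component \<theta> a i \<longleftrightarrow>
     (\<exists>j. j \<noteq> i \<and> component \<theta> a i = {i, j} \<and> {a i j, a j i} = {-1, -3})"

definition Rpre_rels :: "nat \<Rightarrow> (nat \<Rightarrow> 'g) \<Rightarrow> (nat \<Rightarrow> 'g \<Rightarrow> 'k::field) \<Rightarrow> (nat \<Rightarrow> nat \<Rightarrow> int) \<Rightarrow> 'k ncpoly set" where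
  "Rpre_rels \<theta> g \<chi> a = {(ad_sk g \<chi> i ^^ nat (1 - a i j)) (X j) | i j. i < \<theta> \<and> j < \<theta> \<and> i \<noteq> j}"

definition Sord_rels :: "nat \<Rightarrow> (nat \<Rightarrow> 'g) \<Rightarrow> (nat \<Rightarrow> 'g \<Rightarrow> 'k::field) \<Rightarrow> 'k ncpoly set" where
  "Sord_rels \<theta> g \<chi> = {ad_sk g \<chi> i (X j) | i j. i < j \<and> j < \<theta>}"

definition sord_rels :: "nat \<Rightarrow> (nat \<Rightarrow> 'g) \<Rightarrow> (nat \<Rightarrow> 'g \<Rightarrow> 'k::field) \<Rightarrow> 'k ncpoly set" where
  "sord_rels \<theta> g \<chi> = Sord_rels \<theta> g \<chi> \<union> {mon (replicate (mord (\<chi> i (g i))) i) | i. i < \<theta>}"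

end

theory Submission
  imports Defs "HOL-Combinatorics.Multiset_Permutations"
begin

text \<open>In S_ord the relations x_i x_j = q_ij x_j x_i (i < j) rewrite every word as a scalar
  multiple of its sorted rearrangement, so a multihomogeneous element of multidegree M lies in
  the ideal as soon as one linear functional on the degree-M component vanishes on it (or the
  sorted word of degree M itself lies in the ideal). This functional turns ad_sk(x_i) into
  multiplication by an explicit scalar, and for ad_sk(x_i)^(1 - a_ij)(x_j) one of the scalars
  m = 0, ..., -a_ij vanishes: the one for m = 0 is q_ij - q_ij if i < j, the one for m = -a_ij
  is 1 - q_ij q_ji q_ii^(-a_ij) if j < i. For an element f of the Nichols ideal, the quantum
  symmetrizer evaluated at the decreasingly sorted word of degree M equals the product of the
  q-factorials [m_y]_(q_yy)! of the multiplicities times the functional applied to the degree-M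
  part of f. Hence either the functional vanishes, or some multiplicity m_y reaches N_y and the
  sorted word contains x_y^(N_y).\<close>

lemma mon_ncmult_apply:
  "(mon u \<cdot>\<^sub>T f) w = (if take (length u) w = u then f (drop (length u) w) else 0)"
proof -
  have "(mon u \<cdot>\<^sub>T f) w =
      (\<Sum>k\<le>length w. if k = length u then (if take k w = u then f (drop k w) else 0) else 0)"
    unfolding ncmult_def mon_def by (rule sum.cong) auto
  also have "\<dots> = (if take (length u) w = u then f (drop (length u) w) else 0)"
    by (subst sum.delta) (auto dest: arg_cong[where f = length])
  finally show ?thesis .
qed

lemma ncmult_mon_apply:
  "(f \<cdot>\<^sub>T mon u) w =
     (if length u \<le> length w \<and> drop (length w - length u) w = u
      then f (take (length w - length u) w) else 0)"
proof -
  have "(f \<cdot>\<^sub>T mon u) w =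
      (\<Sum>k\<le>length w. if k = length w - length u
         then (if length u \<le> length w \<and> drop k w = u then f (take k w) else 0) else 0)"
    unfolding ncmult_def mon_def by (rule sum.cong) auto
  then show ?thesis
    by (simp add: sum.delta)
qed

lemma X_ncmult_apply: "(X i \<cdot>\<^sub>T f) w = (case w of [] \<Rightarrow> 0 | z # w' \<Rightarrow> if z = i then f w' else 0)"
  unfolding X_def mon_ncmult_apply by (cases w) auto

lemma ncmult_X_apply: "(f \<cdot>\<^sub>T X i) w = (if w \<noteq> [] \<and> last w = i then f (butlast w) else 0)"
  unfolding X_def ncmult_mon_apply by (cases w rule: rev_cases) auto

lemma mon_ncmult_mon: "mon u \<cdot>\<^sub>T mon v = (mon (u @ v) :: 'k::field ncpoly)"
proof
  fix w
  show "(mon u \<cdot>\<^sub>T mon v) w = (mon (u @ v) :: 'k ncpoly) w"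
    unfolding mon_ncmult_apply by (auto simp: mon_def) (metis append_take_drop_id)+
qed

lemma ncsub_ncmult_distrib: "ncsub f h \<cdot>\<^sub>T k = ncsub (f \<cdot>\<^sub>T k) (h \<cdot>\<^sub>T k)"
  unfolding ncsub_def ncmult_def by (auto simp: algebra_simps sum_subtractf)

lemma ncmult_ncsub_distrib: "k \<cdot>\<^sub>T ncsub f h = ncsub (k \<cdot>\<^sub>T f) (k \<cdot>\<^sub>T h)"
  unfolding ncsub_def ncmult_def by (auto simp: algebra_simps sum_subtractf)

lemma ncscale_ncmult: "ncscale c f \<cdot>\<^sub>T k = ncscale c (f \<cdot>\<^sub>T k)"
  unfolding ncscale_def ncmult_def by (auto simp: algebra_simps sum_distrib_left)

lemma ncmult_ncscale: "k \<cdot>\<^sub>T ncscale c f = ncscale c (k \<cdot>\<^sub>T f)"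
  unfolding ncscale_def ncmult_def by (auto simp: algebra_simps sum_distrib_left)

lemma ncscale_ncscale: "ncscale c (ncscale d f) = ncscale (c * d) f"
  by (simp add: ncscale_def mult.assoc)

lemma ncscale_one: "ncscale 1 f = f"
  by (simp add: ncscale_def)

lemma ideal_gen_sum:
  "finite A \<Longrightarrow> (\<And>a. a \<in> A \<Longrightarrow> h a \<in> ideal_gen \<theta> S) \<Longrightarrow> (\<lambda>w. \<Sum>a\<in>A. h a w) \<in> ideal_gen \<theta> S"
proof (induction A rule: finite_induct)
  case empty
  then show ?case using ideal_gen.zero by simp
next
  case (insert x F)
  then have "ncadd (h x) (\<lambda>w. \<Sum>a\<in>F. h a w) \<in> ideal_gen \<theta> S"
    by (intro ideal_gen.add) auto
  moreover have "ncadd (h x) (\<lambda>w. \<Sum>a\<in>F. h a w) = (\<lambda>w. \<Sum>a\<in>insert x F. h a w)"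
    using insert by (auto simp: ncadd_def)
  ultimately show ?case by simp
qed

lemma ideal_gen_minimal: "S \<subseteq> ideal_gen \<theta> T \<Longrightarrow> ideal_gen \<theta> S \<subseteq> ideal_gen \<theta> T"
proof
  fix f assume S: "S \<subseteq> ideal_gen \<theta> T" and f: "f \<in> ideal_gen \<theta> S"
  from f show "f \<in> ideal_gen \<theta> T"
    by (induction rule: ideal_gen.induct) (use S in \<open>auto intro: ideal_gen.intros\<close>)
qed

definition ideal_cong :: "nat \<Rightarrow> ('k::field) ncpoly set \<Rightarrow> 'k ncpoly \<Rightarrow> 'k ncpoly \<Rightarrow> bool" where
  "ideal_cong \<theta> S f h \<longleftrightarrow> ncsub f h \<in> ideal_gen \<theta> S"

lemma ideal_cong_refl: "ideal_cong \<theta> S f f"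
proof -
  have "ncsub f f = (\<lambda>w. 0)" by (simp add: ncsub_def)
  then show ?thesis unfolding ideal_cong_def by (simp add: ideal_gen.zero)
qed

lemma ideal_cong_sym: "ideal_cong \<theta> S f h \<Longrightarrow> ideal_cong \<theta> S h f"
  unfolding ideal_cong_def
  by (drule ideal_gen.scale[where c = "-1"]) (simp add: ncscale_def ncsub_def)

lemma ideal_cong_trans: "ideal_cong \<theta> S f h \<Longrightarrow> ideal_cong \<theta> S h k \<Longrightarrow> ideal_cong \<theta> S f k"
  unfolding ideal_cong_def
  by (drule (1) ideal_gen.add) (simp add: ncadd_def ncsub_def)

lemma ideal_cong_ncscale: "ideal_cong \<theta> S f h \<Longrightarrow> ideal_cong \<theta> S (ncscale c f) (ncscale c h)"
  unfolding ideal_cong_def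
  by (drule ideal_gen.scale[where c = c]) (simp add: ncscale_def ncsub_def algebra_simps)

lemma ideal_cong_mon_ncmult:
  "ideal_cong \<theta> S f h \<Longrightarrow> u \<in> lists {..<\<theta>} \<Longrightarrow> ideal_cong \<theta> S (mon u \<cdot>\<^sub>T f) (mon u \<cdot>\<^sub>T h)"
  unfolding ideal_cong_def by (drule (1) ideal_gen.lmult) (simp add: ncmult_ncsub_distrib)

lemma ideal_cong_sum:
  assumes "finite A" and "\<And>a. a \<in> A \<Longrightarrow> ideal_cong \<theta> S (F a) (H a)"
  shows "ideal_cong \<theta> S (\<lambda>w. \<Sum>a\<in>A. F a w) (\<lambda>w. \<Sum>a\<in>A. H a w)"
proof -
  have "(\<lambda>w. \<Sum>a\<in>A. ncsub (F a) (H a) w) \<in> ideal_gen \<theta> S"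
    using assms unfolding ideal_cong_def by (rule ideal_gen_sum)
  then show ?thesis
    unfolding ideal_cong_def by (simp add: ncsub_def sum_subtractf)
qed

lemma ideal_cong_mem: "ideal_cong \<theta> S f h \<Longrightarrow> h \<in> ideal_gen \<theta> S \<Longrightarrow> f \<in> ideal_gen \<theta> S"
  unfolding ideal_cong_def by (drule (1) ideal_gen.add) (simp add: ncadd_def ncsub_def)

section \<open>Straightening words modulo the relations of S_ord\<close>

definition ascent_left :: "(nat \<Rightarrow> 'g) \<Rightarrow> (nat \<Rightarrow> 'g \<Rightarrow> 'k::field) \<Rightarrow> nat \<Rightarrow> nat multiset \<Rightarrow> 'k" where
  "ascent_left g \<chi> x M = (\<Prod>z\<in>#{#z \<in># M. x < z#}. \<chi> z (g x))"

definition ascent_right :: "(nat \<Rightarrow> 'g) \<Rightarrow> (nat \<Rightarrow> 'g \<Rightarrow> 'k::field) \<Rightarrow> nat \<Rightarrow> nat multiset \<Rightarrow> 'k" where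
  "ascent_right g \<chi> x M = (\<Prod>z\<in>#{#z \<in># M. z < x#}. \<chi> x (g z))"

text \<open>Since x_j x_i = q_ij^-1 x_i x_j in S_ord for i < j, the word x_u equals
  ascent_weight u / ascent_weight (sort u) times the sorted word there; nmon u is normalized
  so that this factor disappears.\<close>

fun ascent_weight :: "(nat \<Rightarrow> 'g) \<Rightarrow> (nat \<Rightarrow> 'g \<Rightarrow> 'k::field) \<Rightarrow> nat list \<Rightarrow> 'k" where
  "ascent_weight g \<chi> [] = 1"
| "ascent_weight g \<chi> (x # u) = ascent_left g \<chi> x (mset u) * ascent_weight g \<chi> u"

lemma ascent_weight_snoc:
  "ascent_weight g \<chi> (u @ [x]) = ascent_weight g \<chi> u * ascent_right g \<chi> x (mset u)"
  by (induction u) (auto simp: ascent_left_def ascent_right_def)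

definition nmon :: "(nat \<Rightarrow> 'g) \<Rightarrow> (nat \<Rightarrow> 'g \<Rightarrow> 'k::field) \<Rightarrow> nat list \<Rightarrow> 'k ncpoly" where
  "nmon g \<chi> u = ncscale (inverse (ascent_weight g \<chi> u)) (mon u)"

definition ascent_functional ::
    "(nat \<Rightarrow> 'g) \<Rightarrow> (nat \<Rightarrow> 'g \<Rightarrow> 'k::field) \<Rightarrow> nat multiset \<Rightarrow> 'k ncpoly \<Rightarrow> 'k" where
  "ascent_functional g \<chi> M f = (\<Sum>u\<in>permutations_of_multiset M. f u * ascent_weight g \<chi> u)"

definition homogeneous :: "nat multiset \<Rightarrow> ('k::field) ncpoly \<Rightarrow> bool" where
  "homogeneous M f \<longleftrightarrow> (\<forall>w. f w \<noteq> 0 \<longrightarrow> mset w = M)"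

lemma gact_X: "gact \<chi> h (X x) = ncscale (\<chi> x h) (X x)"
  by (auto simp: gact_def X_def mon_def ncscale_def)

lemma ad_sk_X: "ad_sk g \<chi> y (X x) = ncsub (mon [y, x]) (ncscale (\<chi> x (g y)) (mon [x, y]))"
  unfolding ad_sk_def gact_X by (simp add: X_def ncscale_ncmult mon_ncmult_mon)

locale Sord_ideal =
  fixes \<theta> :: nat and g :: "nat \<Rightarrow> 'g" and \<chi> :: "nat \<Rightarrow> 'g \<Rightarrow> 'k::field" and S :: "'k ncpoly set"
  assumes chars_nonzero: "\<And>b x. b < \<theta> \<Longrightarrow> \<chi> b x \<noteq> 0"
    and Sord_rels_subset: "Sord_rels \<theta> g \<chi> \<subseteq> S"
begin

abbreviation cong :: "'k ncpoly \<Rightarrow> 'k ncpoly \<Rightarrow> bool" where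
  "cong \<equiv> ideal_cong \<theta> S"

lemma ascent_weight_nonzero: "u \<in> lists {..<\<theta>} \<Longrightarrow> ascent_weight g \<chi> u \<noteq> 0"
  by (induction u) (auto simp: ascent_left_def prod_mset_zero_iff chars_nonzero)

lemma nmon_swap:
  assumes yx: "y < x" and x: "x < \<theta>" and r: "r \<in> lists {..<\<theta>}"
  shows "cong (nmon g \<chi> (x # y # r)) (nmon g \<chi> (y # x # r))"
proof -
  let ?q = "\<chi> x (g y)" and ?D = "ascent_weight g \<chi> (y # x # r)"
  have "ad_sk g \<chi> y (X x) \<in> S"
    using Sord_rels_subset yx x unfolding Sord_rels_def by blast
  then have "ad_sk g \<chi> y (X x) \<cdot>\<^sub>T mon r \<in> ideal_gen \<theta> S"
    using r by (intro ideal_gen.rmult ideal_gen.gen)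
  then have "cong (mon (y # x # r)) (ncscale ?q (mon (x # y # r)))"
    by (simp add: ideal_cong_def ad_sk_X ncsub_ncmult_distrib ncscale_ncmult mon_ncmult_mon)
  then have "cong (ncscale (inverse ?D) (mon (y # x # r)))
      (ncscale (inverse ?D * ?q) (mon (x # y # r)))"
    using ideal_cong_ncscale by (fastforce simp: ncscale_ncscale)
  moreover have "inverse ?D * ?q = inverse (ascent_weight g \<chi> (x # y # r))"
    using yx x chars_nonzero
    by (simp add: ascent_left_def field_simps)
  ultimately show ?thesis
    unfolding nmon_def by (metis ideal_cong_sym)
qed

lemma nmon_Cons:
  assumes uv: "cong (nmon g \<chi> u) (nmon g \<chi> v)" and m: "mset u = mset v" and x: "x < \<theta>"
  shows "cong (nmon g \<chi> (x # u)) (nmon g \<chi> (x # v))"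
proof -
  have nmon_Cons_eq: "nmon g \<chi> (x # w) =
      ncscale (inverse (ascent_left g \<chi> x (mset w))) (mon [x] \<cdot>\<^sub>T nmon g \<chi> w)" for w
    by (simp add: nmon_def ncmult_ncscale mon_ncmult_mon ncscale_ncscale mult.commute)
  show ?thesis
    unfolding nmon_Cons_eq m using uv x
    by (intro ideal_cong_ncscale ideal_cong_mon_ncmult) auto
qed

lemma nmon_insort:
  assumes x: "x < \<theta>"
  shows "v \<in> lists {..<\<theta>} \<Longrightarrow> cong (nmon g \<chi> (x # v)) (nmon g \<chi> (insort x v))"
proof (induction v)
  case Nil
  then show ?case by (simp add: ideal_cong_refl)
next
  case (Cons y v)
  show ?case
  proof (cases "x \<le> y")
    case True
    then show ?thesis by (simp add: ideal_cong_refl)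
  next
    case False
    with Cons x have "cong (nmon g \<chi> (x # y # v)) (nmon g \<chi> (y # x # v))"
      by (intro nmon_swap) auto
    moreover have "cong (nmon g \<chi> (y # x # v)) (nmon g \<chi> (y # insort x v))"
      using Cons by (intro nmon_Cons) auto
    ultimately show ?thesis
      using False by (auto intro: ideal_cong_trans)
  qed
qed

lemma nmon_sort: "u \<in> lists {..<\<theta>} \<Longrightarrow> cong (nmon g \<chi> u) (nmon g \<chi> (sort u))"
proof (induction u)
  case Nil
  then show ?case by (simp add: ideal_cong_refl)
next
  case (Cons x u)
  then have "cong (nmon g \<chi> (x # u)) (nmon g \<chi> (x # sort u))"
    by (intro nmon_Cons) auto
  moreover have "cong (nmon g \<chi> (x # sort u)) (nmon g \<chi> (insort x (sort u)))"
    using Cons by (intro nmon_insort) auto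
  ultimately show ?case by (auto intro: ideal_cong_trans)
qed

lemma homogeneous_cong_sorted:
  assumes f: "homogeneous M f" and M: "set_mset M \<subseteq> {..<\<theta>}"
  defines "v \<equiv> sorted_list_of_multiset M"
  shows "cong f (ncscale (ascent_functional g \<chi> M f) (nmon g \<chi> v))"
proof -
  let ?P = "permutations_of_multiset M"
  have lists: "u \<in> lists {..<\<theta>}" if "u \<in> ?P" for u
    using that M by (auto simp: permutations_of_multiset_def simp flip: set_mset_mset)
  define c where "c u = f u * ascent_weight g \<chi> u" for u
  have f_eq: "f = (\<lambda>w. \<Sum>u\<in>?P. ncscale (c u) (nmon g \<chi> u) w)"
  proof
    fix w
    have "(\<Sum>u\<in>?P. ncscale (c u) (nmon g \<chi> u) w) = (\<Sum>u\<in>?P. if w = u then f u else 0)"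
      using ascent_weight_nonzero[OF lists]
      by (intro sum.cong) (auto simp: c_def nmon_def ncscale_def mon_def)
    also have "\<dots> = f w"
      using f by (subst sum.delta'[OF finite_permutations_of_multiset])
        (auto simp: homogeneous_def permutations_of_multiset_def)
    finally show "f w = (\<Sum>u\<in>?P. ncscale (c u) (nmon g \<chi> u) w)" ..
  qed
  have "cong f (\<lambda>w. \<Sum>u\<in>?P. ncscale (c u) (nmon g \<chi> v) w)"
    unfolding f_eq
  proof (intro ideal_cong_sum ideal_cong_ncscale)
    fix u assume u: "u \<in> ?P"
    have "v = sort u"
      unfolding v_def permutations_of_multisetD[OF u, symmetric] by simp
    then show "cong (nmon g \<chi> u) (nmon g \<chi> v)"
      using nmon_sort[OF lists[OF u]] by simp
  qed simp
  moreover have "(\<lambda>w. \<Sum>u\<in>?P. ncscale (c u) (nmon g \<chi> v) w) =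
      ncscale (ascent_functional g \<chi> M f) (nmon g \<chi> v)"
    by (simp add: c_def ncscale_def ascent_functional_def sum_distrib_right)
  ultimately show ?thesis by simp
qed

lemma homogeneous_mem_ideal:
  assumes "homogeneous M f" and "set_mset M \<subseteq> {..<\<theta>}"
    and "ascent_functional g \<chi> M f = 0 \<or> mon (sorted_list_of_multiset M) \<in> ideal_gen \<theta> S"
  shows "f \<in> ideal_gen \<theta> S"
proof (rule ideal_cong_mem[OF homogeneous_cong_sorted[OF assms(1,2)]])
  let ?c = "ascent_functional g \<chi> M f" and ?v = "sorted_list_of_multiset M"
  show "ncscale ?c (nmon g \<chi> ?v) \<in> ideal_gen \<theta> S"
  proof (cases "?c = 0")
    case True
    then show ?thesis by (simp add: ncscale_def ideal_gen.zero)
  next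
    case False
    then show ?thesis
      using assms(3) unfolding nmon_def by (intro ideal_gen.scale) simp
  qed
qed

end

section \<open>Serre relations\<close>

definition mchar :: "(nat \<Rightarrow> 'g \<Rightarrow> 'k::field) \<Rightarrow> nat multiset \<Rightarrow> 'g \<Rightarrow> 'k" where
  "mchar \<chi> M h = (\<Prod>z\<in>#M. \<chi> z h)"

lemma prod_nth_eq_prod_mset: "(\<Prod>k<length w. F (w ! k)) = (\<Prod>z\<in>#mset w. F z)"
  by (induction w) (auto simp del: prod.lessThan_Suc simp add: prod.lessThan_Suc_shift)

lemma gact_homogeneous:
  assumes "homogeneous M f"
  shows "gact \<chi> h f = ncscale (mchar \<chi> M h) f"
proof
  fix w
  show "gact \<chi> h f w = ncscale (mchar \<chi> M h) f w"
    using assms prod_nth_eq_prod_mset[of "\<lambda>z. \<chi> z h" w]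
    by (cases "f w = 0") (auto simp: gact_def ncscale_def mchar_def homogeneous_def)
qed

lemma homogeneous_X: "homogeneous {#j#} (X j)"
  by (simp add: homogeneous_def X_def mon_def)

lemma homogeneous_ad_sk:
  assumes y: "homogeneous M y"
  shows "homogeneous (add_mset i M) (ad_sk g \<chi> i y)"
  unfolding homogeneous_def
proof (intro allI impI)
  fix w assume "ad_sk g \<chi> i y w \<noteq> 0"
  then have "(X i \<cdot>\<^sub>T y) w \<noteq> 0 \<or> (y \<cdot>\<^sub>T X i) w \<noteq> 0"
    unfolding ad_sk_def gact_homogeneous[OF y] ncscale_ncmult
    by (auto simp: ncsub_def ncscale_def)
  then show "mset w = add_mset i M"
  proof
    assume "(X i \<cdot>\<^sub>T y) w \<noteq> 0"
    then obtain w' where "w = i # w'" "y w' \<noteq> 0"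
      by (auto simp: X_ncmult_apply split: list.splits if_splits)
    then show ?thesis using y by (simp add: homogeneous_def)
  next
    assume "(y \<cdot>\<^sub>T X i) w \<noteq> 0"
    then obtain w' where "w = w' @ [i]" "y w' \<noteq> 0"
      by (cases w rule: rev_cases) (auto simp: ncmult_X_apply split: if_splits)
    then show ?thesis using y by (simp add: homogeneous_def)
  qed
qed

lemma ascent_functional_ncsub:
  "ascent_functional g \<chi> M (ncsub f h) = ascent_functional g \<chi> M f - ascent_functional g \<chi> M h"
  unfolding ascent_functional_def ncsub_def by (simp add: algebra_simps sum_subtractf)

lemma ascent_functional_ncscale:
  "ascent_functional g \<chi> M (ncscale c f) = c * ascent_functional g \<chi> M f"
  unfolding ascent_functional_def ncscale_def by (simp add: algebra_simps sum_distrib_left)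

lemma ascent_functional_X: "ascent_functional g \<chi> {#j#} (X j) = 1"
  by (simp add: ascent_functional_def X_def mon_def ascent_left_def)

lemma ascent_functional_X_ncmult:
  "ascent_functional g \<chi> (add_mset i M) (X i \<cdot>\<^sub>T f) =
     ascent_left g \<chi> i M * ascent_functional g \<chi> M f"
proof -
  let ?P = permutations_of_multiset
  have "ascent_functional g \<chi> (add_mset i M) (X i \<cdot>\<^sub>T f) =
      (\<Sum>u\<in>(Cons i) ` ?P M. (X i \<cdot>\<^sub>T f) u * ascent_weight g \<chi> u)"
    unfolding ascent_functional_def
  proof (rule sum.mono_neutral_right[OF finite_permutations_of_multiset])
    show "\<forall>u\<in>?P (add_mset i M) - (Cons i) ` ?P M. (X i \<cdot>\<^sub>T f) u * ascent_weight g \<chi> u = 0"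
      by (auto simp: X_ncmult_apply permutations_of_multiset_def image_iff split: list.split)
  qed (auto simp: permutations_of_multiset_def)
  also have "\<dots> = (\<Sum>u\<in>?P M. (X i \<cdot>\<^sub>T f) (i # u) * ascent_weight g \<chi> (i # u))"
    by (subst sum.reindex) auto
  also have "\<dots> = ascent_left g \<chi> i M * ascent_functional g \<chi> M f"
    unfolding ascent_functional_def sum_distrib_left
    by (rule sum.cong) (auto simp: X_ncmult_apply permutations_of_multiset_def)
  finally show ?thesis .
qed

lemma ascent_functional_ncmult_X:
  "ascent_functional g \<chi> (add_mset i M) (f \<cdot>\<^sub>T X i) =
     ascent_right g \<chi> i M * ascent_functional g \<chi> M f"
proof -
  let ?P = permutations_of_multiset
  have "ascent_functional g \<chi> (add_mset i M) (f \<cdot>\<^sub>T X i) =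
      (\<Sum>u\<in>(\<lambda>u. u @ [i]) ` ?P M. (f \<cdot>\<^sub>T X i) u * ascent_weight g \<chi> u)"
    unfolding ascent_functional_def
  proof (rule sum.mono_neutral_right[OF finite_permutations_of_multiset])
    show "\<forall>u\<in>?P (add_mset i M) - (\<lambda>u. u @ [i]) ` ?P M. (f \<cdot>\<^sub>T X i) u * ascent_weight g \<chi> u = 0"
    proof
      fix u assume u: "u \<in> ?P (add_mset i M) - (\<lambda>u. u @ [i]) ` ?P M"
      show "(f \<cdot>\<^sub>T X i) u * ascent_weight g \<chi> u = 0"
        using u by (cases u rule: rev_cases)
          (auto simp: ncmult_X_apply permutations_of_multiset_def image_iff)
    qed
  qed (auto simp: permutations_of_multiset_def)
  also have "\<dots> = (\<Sum>u\<in>?P M. (f \<cdot>\<^sub>T X i) (u @ [i]) * ascent_weight g \<chi> (u @ [i]))"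
    by (subst sum.reindex) (auto simp: inj_on_def)
  also have "\<dots> = ascent_right g \<chi> i M * ascent_functional g \<chi> M f"
    unfolding ascent_functional_def sum_distrib_left
    by (rule sum.cong) (auto simp: ncmult_X_apply permutations_of_multiset_def ascent_weight_snoc)
  finally show ?thesis .
qed

definition ad_sk_factor :: "(nat \<Rightarrow> 'g) \<Rightarrow> (nat \<Rightarrow> 'g \<Rightarrow> 'k::field) \<Rightarrow> nat \<Rightarrow> nat multiset \<Rightarrow> 'k" where
  "ad_sk_factor g \<chi> i M = ascent_left g \<chi> i M - mchar \<chi> M (g i) * ascent_right g \<chi> i M"

lemma ascent_functional_ad_sk:
  assumes "homogeneous M y"
  shows "ascent_functional g \<chi> (add_mset i M) (ad_sk g \<chi> i y) =
    ad_sk_factor g \<chi> i M * ascent_functional g \<chi> M y"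
  unfolding ad_sk_def gact_homogeneous[OF assms] ncscale_ncmult ascent_functional_ncsub
    ascent_functional_ncscale ascent_functional_X_ncmult ascent_functional_ncmult_X ad_sk_factor_def
  by (simp add: algebra_simps)

lemma homogeneous_ad_sk_power:
  "homogeneous (add_mset j (replicate_mset k i)) ((ad_sk g \<chi> i ^^ k) (X j))"
proof (induction k)
  case (Suc k)
  then show ?case
    using homogeneous_ad_sk[OF Suc, where g = g and \<chi> = \<chi> and i = i] by (simp add: add_mset_commute)
qed (simp add: homogeneous_X)

lemma ascent_functional_ad_sk_power:
  "ascent_functional g \<chi> (add_mset j (replicate_mset k i)) ((ad_sk g \<chi> i ^^ k) (X j)) =
     (\<Prod>m<k. ad_sk_factor g \<chi> i (add_mset j (replicate_mset m i)))"
proof (induction k)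
  case (Suc k)
  then show ?case
    using ascent_functional_ad_sk[where g = g and \<chi> = \<chi> and i = i,
        OF homogeneous_ad_sk_power[where g = g and \<chi> = \<chi> and i = i and j = j and k = k]]
    by (simp add: add_mset_commute mult_ac)
qed (simp add: ascent_functional_X)

lemma filter_replicate_mset:
  "filter_mset P (replicate_mset n x) = (if P x then replicate_mset n x else {#})"
  by (induction n) auto

lemma ad_sk_factor_vanishes:
  fixes \<chi> :: "nat \<Rightarrow> 'g \<Rightarrow> 'k::field"
  assumes ij: "i \<noteq> j" and a: "a \<le> 0"
    and cartan: "\<chi> j (g i) * \<chi> i (g j) = \<chi> i (g i) powi a" and q: "\<chi> i (g i) \<noteq> 0"
  shows "\<exists>m < nat (1 - a). ad_sk_factor g \<chi> i (add_mset j (replicate_mset m i)) = 0"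
proof (cases "i < j")
  case True
  then have "ad_sk_factor g \<chi> i (add_mset j (replicate_mset 0 i)) = 0"
    by (simp add: ad_sk_factor_def ascent_left_def ascent_right_def mchar_def)
  then show ?thesis using a by (intro exI[of _ 0]) auto
next
  case False
  then have ji: "j < i" using ij by auto
  define m where "m = nat (- a)"
  have "ad_sk_factor g \<chi> i (add_mset j (replicate_mset m i)) =
      1 - (\<chi> j (g i) * \<chi> i (g j)) * \<chi> i (g i) ^ m"
    using ji by (simp add: ad_sk_factor_def ascent_left_def ascent_right_def mchar_def
        filter_replicate_mset algebra_simps)
  also have "\<dots> = 0"
    using a q unfolding cartan m_def by (simp add: power_int_def power_inverse)
  finally show ?thesis using a unfolding m_def by (intro exI[of _ "nat (- a)"]) auto
qed

context Sord_ideal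
begin

lemma Serre_relation_mem_ideal:
  assumes i: "i < \<theta>" and j: "j < \<theta>" and ij: "i \<noteq> j" and a: "a \<le> 0"
    and cartan: "\<chi> j (g i) * \<chi> i (g j) = \<chi> i (g i) powi a"
  shows "(ad_sk g \<chi> i ^^ nat (1 - a)) (X j) \<in> ideal_gen \<theta> S"
proof -
  let ?k = "nat (1 - a)"
  obtain m where "m < ?k" "ad_sk_factor g \<chi> i (add_mset j (replicate_mset m i)) = 0"
    using ad_sk_factor_vanishes[where g = g and \<chi> = \<chi>, OF ij a cartan chars_nonzero[OF i]] by blast
  then have "ascent_functional g \<chi> (add_mset j (replicate_mset ?k i))
      ((ad_sk g \<chi> i ^^ ?k) (X j)) = 0"
    unfolding ascent_functional_ad_sk_power by (auto intro: prod_zero)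
  moreover have "set_mset (add_mset j (replicate_mset ?k i)) \<subseteq> {..<\<theta>}"
    using i j by auto
  ultimately show ?thesis
    by (blast intro: homogeneous_mem_ideal[OF homogeneous_ad_sk_power])
qed

end

section \<open>The quantum symmetrizer on words\<close>

definition skip :: "nat \<Rightarrow> nat \<Rightarrow> nat" where
  "skip p v = (if v < p then v else Suc v)"

text \<open>perm_cons n p \<tau> sends 0 to p and b + 1 to the (\<tau> b)-th element of {..n} - {p};
  every permutation of {..n} arises uniquely in this way.\<close>

definition perm_cons :: "nat \<Rightarrow> nat \<Rightarrow> (nat \<Rightarrow> nat) \<Rightarrow> nat \<Rightarrow> nat" where
  "perm_cons n p \<tau> = (\<lambda>b. if b = 0 then p else if b \<le> n then skip p (\<tau> (b - 1)) else b)"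

lemma perm_cons_permutes:
  assumes p: "p \<le> n" and \<tau>: "\<tau> permutes {..<n}"
  shows "perm_cons n p \<tau> permutes {..<Suc n}"
proof (rule inj_imp_permutes)
  have \<tau>_less: "\<tau> b < n" if "b < n" for b
    using permutes_in_image[OF \<tau>] that by auto
  show "inj_on (perm_cons n p \<tau>) {..<Suc n}"
  proof (rule inj_onI)
    fix x y
    assume x: "x \<in> {..<Suc n}" and y: "y \<in> {..<Suc n}"
      and eq: "perm_cons n p \<tau> x = perm_cons n p \<tau> y"
    show "x = y"
    proof (cases "x = 0"; cases "y = 0")
      assume "x \<noteq> 0" "y \<noteq> 0"
      then have "\<tau> (x - 1) = \<tau> (y - 1)"
        using eq x y by (auto simp: perm_cons_def skip_def split: if_splits)
      then have "x - 1 = y - 1"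
        using permutes_inj[OF \<tau>] by (auto dest: injD)
      then show ?thesis using \<open>x \<noteq> 0\<close> \<open>y \<noteq> 0\<close> by simp
    qed (use eq x y in \<open>auto simp: perm_cons_def skip_def split: if_splits\<close>)
  qed
  show "perm_cons n p \<tau> x \<in> {..<Suc n}" if "x \<in> {..<Suc n}" for x
    using that p \<tau>_less[of "x - 1"] by (auto simp: perm_cons_def skip_def)
  show "perm_cons n p \<tau> x = x" if "x \<notin> {..<Suc n}" for x
    using that by (auto simp: perm_cons_def)
qed simp

lemma perm_cons_inject:
  assumes "\<tau> permutes {..<n}" "\<tau>' permutes {..<n}" "perm_cons n p \<tau> = perm_cons n p' \<tau>'"
  shows "p = p' \<and> \<tau> = \<tau>'"
proof -
  have p: "p = p'"
    using fun_cong[OF assms(3), of 0] by (simp add: perm_cons_def)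
  have "\<tau> b = \<tau>' b" for b
  proof (cases "b < n")
    case True
    then show ?thesis
      using fun_cong[OF assms(3), of "Suc b"] p
      by (auto simp: perm_cons_def skip_def split: if_splits)
  next
    case False
    then show ?thesis
      using permutes_not_in[OF assms(1)] permutes_not_in[OF assms(2)] by auto
  qed
  then show ?thesis using p by auto
qed

lemma permutes_Suc_eq_perm_cons_image:
  "{\<sigma>. \<sigma> permutes {..<Suc n}} = (\<lambda>(p, \<tau>). perm_cons n p \<tau>) ` ({..n} \<times> {\<tau>. \<tau> permutes {..<n}})"
proof (rule sym, rule card_subset_eq)
  show "(\<lambda>(p, \<tau>). perm_cons n p \<tau>) ` ({..n} \<times> {\<tau>. \<tau> permutes {..<n}}) \<subseteq> {\<sigma>. \<sigma> permutes {..<Suc n}}"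
    using perm_cons_permutes by auto
  have "inj_on (\<lambda>(p, \<tau>). perm_cons n p \<tau>) ({..n} \<times> {\<tau>. \<tau> permutes {..<n}})"
    by (rule inj_onI) (auto dest: perm_cons_inject)
  then show "card ((\<lambda>(p, \<tau>). perm_cons n p \<tau>) ` ({..n} \<times> {\<tau>. \<tau> permutes {..<n}})) =
      card {\<sigma>. \<sigma> permutes {..<Suc n}}"
    by (simp add: card_image card_cartesian_product card_permutations)
qed (simp add: finite_permutations)

lemma sum_permutes_Suc:
  "(\<Sum>\<sigma> | \<sigma> permutes {..<Suc n}. F \<sigma>) = (\<Sum>p\<le>n. \<Sum>\<tau> | \<tau> permutes {..<n}. F (perm_cons n p \<tau>))"
proof -
  have inj: "inj_on (\<lambda>(p, \<tau>). perm_cons n p \<tau>) ({..n} \<times> {\<tau>. \<tau> permutes {..<n}})"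
    by (rule inj_onI) (auto dest: perm_cons_inject)
  show ?thesis
    unfolding permutes_Suc_eq_perm_cons_image sum.reindex[OF inj] sum.cartesian_product
    by (simp add: case_prod_beta)
qed

definition del_nth :: "nat \<Rightarrow> 'a list \<Rightarrow> 'a list" where
  "del_nth p w = take p w @ drop (Suc p) w"

lemma length_del_nth: "p < length w \<Longrightarrow> length (del_nth p w) = length w - 1"
  by (simp add: del_nth_def)

lemma nth_del_nth: "p < length w \<Longrightarrow> v < length w - 1 \<Longrightarrow> del_nth p w ! v = w ! skip p v"
  by (auto simp: del_nth_def skip_def nth_append min_def)

lemma mset_del_nth:
  assumes "p < length w"
  shows "mset w = add_mset (w ! p) (mset (del_nth p w))"
proof -
  have "mset w = mset (take p w @ w ! p # drop (Suc p) w)"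
    using id_take_nth_drop[OF assms] by simp
  then show ?thesis by (simp add: del_nth_def)
qed

lemma sorted_wrt_del_nth:
  assumes "sorted_wrt P w"
  shows "sorted_wrt P (del_nth p w)"
proof -
  have "sorted_wrt P (take p w @ drop p w)" and "sorted_wrt P (drop (Suc p) w)"
    using assms by (simp_all add: sorted_wrt_drop)
  then show ?thesis
    unfolding del_nth_def sorted_wrt_append using set_drop_subset_set_drop[of p "Suc p" w] by auto
qed

definition inversions :: "nat \<Rightarrow> (nat \<Rightarrow> nat) \<Rightarrow> (nat \<times> nat) set" where
  "inversions n \<sigma> = {(a, b). a < b \<and> b < n \<and> \<sigma> b < \<sigma> a}"

lemma finite_inversions: "finite (inversions n \<sigma>)"
  by (rule finite_subset[of _ "{..<n} \<times> {..<n}"]) (auto simp: inversions_def)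

lemma inversions_perm_cons:
  "inversions (Suc n) (perm_cons n p \<tau>) =
     (\<lambda>b. (0, Suc b)) ` {b. b < n \<and> \<tau> b < p} \<union> (\<lambda>(a, b). (Suc a, Suc b)) ` inversions n \<tau>"
proof (rule set_eqI)
  fix ab :: "nat \<times> nat"
  obtain a b where ab: "ab = (a, b)" by fastforce
  show "ab \<in> inversions (Suc n) (perm_cons n p \<tau>) \<longleftrightarrow>
      ab \<in> (\<lambda>b. (0, Suc b)) ` {b. b < n \<and> \<tau> b < p} \<union> (\<lambda>(a, b). (Suc a, Suc b)) ` inversions n \<tau>"
    unfolding ab inversions_def
    by (cases a; cases b) (auto simp: perm_cons_def skip_def)
qed

definition braid_weight :: "(nat \<Rightarrow> 'g) \<Rightarrow> (nat \<Rightarrow> 'g \<Rightarrow> 'k::field) \<Rightarrow> nat list \<Rightarrow> (nat \<Rightarrow> nat) \<Rightarrow> 'k" where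
  "braid_weight g \<chi> u \<sigma> = (\<Prod>(a, b)\<in>inversions (length u) \<sigma>. \<chi> (u ! b) (g (u ! a)))"

lemma braid_weight_perm_cons:
  "braid_weight g \<chi> (x # u) (perm_cons (length u) p \<tau>) =
     (\<Prod>b | b < length u \<and> \<tau> b < p. \<chi> (u ! b) (g x)) * braid_weight g \<chi> u \<tau>"
proof -
  let ?F = "\<lambda>(a, b). \<chi> ((x # u) ! b) (g ((x # u) ! a))"
  have "braid_weight g \<chi> (x # u) (perm_cons (length u) p \<tau>) =
      (\<Prod>ab\<in>(\<lambda>b. (0, Suc b)) ` {b. b < length u \<and> \<tau> b < p}. ?F ab) *
      (\<Prod>ab\<in>(\<lambda>(a, b). (Suc a, Suc b)) ` inversions (length u) \<tau>. ?F ab)"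
    unfolding braid_weight_def length_Cons inversions_perm_cons
    by (rule prod.union_disjoint) (auto simp: finite_inversions)
  also have "\<dots> = (\<Prod>b | b < length u \<and> \<tau> b < p. \<chi> (u ! b) (g x)) * braid_weight g \<chi> u \<tau>"
    unfolding braid_weight_def
    by (subst (1 2) prod.reindex) (auto simp: inj_on_def case_prod_beta)
  finally show ?thesis .
qed

lemma permute_list_inv_eq_iff:
  assumes \<sigma>: "\<sigma> permutes {..<length u}"
  shows "permute_list (inv \<sigma>) u = w \<longleftrightarrow> length w = length u \<and> (\<forall>b<length u. w ! \<sigma> b = u ! b)"
proof -
  have inv_less: "inv \<sigma> i < length u" if "i < length u" for i
    using permutes_in_image[OF permutes_inv[OF \<sigma>]] that by auto
  have \<sigma>_less: "\<sigma> b < length u" if "b < length u" for b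
    using permutes_in_image[OF \<sigma>] that by auto
  have "permute_list (inv \<sigma>) u = w \<longleftrightarrow> length w = length u \<and> (\<forall>i<length u. w ! i = u ! inv \<sigma> i)"
    by (auto simp: permute_list_def intro!: nth_equalityI)
  also have "\<dots> \<longleftrightarrow> length w = length u \<and> (\<forall>b<length u. w ! \<sigma> b = u ! b)"
    using inv_less \<sigma>_less permutes_inverses[OF \<sigma>] by metis
  finally show ?thesis .
qed

lemma permute_list_perm_cons_eq_iff:
  assumes n: "length u = n" and p: "p \<le> n" and \<tau>: "\<tau> permutes {..<n}"
  shows "permute_list (inv (perm_cons n p \<tau>)) (x # u) = w \<longleftrightarrow>
    p < length w \<and> w ! p = x \<and> permute_list (inv \<tau>) u = del_nth p w"
proof -
  have \<tau>_less: "\<tau> b < n" if "b < n" for b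
    using permutes_in_image[OF \<tau>] that by auto
  have \<sigma>: "perm_cons n p \<tau> permutes {..<length (x # u)}"
    using perm_cons_permutes[OF p \<tau>] n by simp
  show ?thesis
    unfolding permute_list_inv_eq_iff[OF \<sigma>] permute_list_inv_eq_iff[OF \<tau>[folded n]]
  proof (intro iffI conjI allI impI; (elim conjE)?)
    assume len: "length w = length (x # u)"
      and nth: "\<forall>b<length (x # u). w ! perm_cons n p \<tau> b = (x # u) ! b"
    show "p < length w" using len n p by simp
    show "w ! p = x" using nth[rule_format, of 0] by (simp add: perm_cons_def)
    show "length (del_nth p w) = length u" using len n p by (simp add: length_del_nth)
    fix b assume "b < length u"
    then show "del_nth p w ! \<tau> b = u ! b"
      using nth[rule_format, of "Suc b"] len n p \<tau>_less[of b]
      by (simp add: perm_cons_def nth_del_nth)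
  next
    assume p_less: "p < length w" and x: "w ! p = x" and len: "length (del_nth p w) = length u"
      and nth: "\<forall>b<length u. del_nth p w ! \<tau> b = u ! b"
    show len': "length w = length (x # u)"
      using p_less len by (simp add: length_del_nth)
    fix b assume b: "b < length (x # u)"
    show "w ! perm_cons n p \<tau> b = (x # u) ! b"
    proof (cases b)
      case 0
      then show ?thesis using x by (simp add: perm_cons_def)
    next
      case (Suc c)
      then have c: "c < length u" using b by simp
      have "w ! skip p (\<tau> c) = del_nth p w ! \<tau> c"
        using nth_del_nth[OF p_less] \<tau>_less[of c] c len' n by simp
      also have "\<dots> = u ! c" using nth c by blast
      finally show ?thesis using Suc c n by (simp add: perm_cons_def)
    qed
  qed
qed

lemma prod_perm_cons_prefix:
  assumes \<tau>: "\<tau> permutes {..<length u}" and p: "p < length w"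
    and u: "permute_list (inv \<tau>) u = del_nth p w"
  shows "(\<Prod>b | b < length u \<and> \<tau> b < p. F (u ! b)) = (\<Prod>k<p. F (w ! k))"
proof -
  have len: "length w = Suc (length u)"
    using arg_cong[OF u, of length] p by (simp add: length_del_nth)
  have u_nth: "u ! b = w ! \<tau> b" if b: "b < length u" "\<tau> b < p" for b
  proof -
    have "u ! b = del_nth p w ! \<tau> b"
      using u b unfolding permute_list_inv_eq_iff[OF \<tau>] by simp
    also have "\<dots> = w ! \<tau> b"
      using b p len by (simp add: nth_del_nth skip_def)
    finally show ?thesis .
  qed
  have "(\<Prod>b | b < length u \<and> \<tau> b < p. F (u ! b)) = (\<Prod>b | b < length u \<and> \<tau> b < p. F (w ! \<tau> b))"
    using u_nth by (intro prod.cong) auto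
  also have "\<dots> = (\<Prod>k<p. F (w ! k))"
  proof (rule prod.reindex_bij_betw)
    have "\<tau> ` {b. b < length u \<and> \<tau> b < p} = {..<p}"
    proof
      show "{..<p} \<subseteq> \<tau> ` {b. b < length u \<and> \<tau> b < p}"
      proof
        fix k assume k: "k \<in> {..<p}"
        have "inv \<tau> k < length u"
          using permutes_in_image[OF permutes_inv[OF \<tau>], of k] k p len by auto
        then show "k \<in> \<tau> ` {b. b < length u \<and> \<tau> b < p}"
          using k permutes_inverses(1)[OF \<tau>] by (auto intro!: image_eqI[of _ _ "inv \<tau> k"])
      qed
    qed auto
    then show "bij_betw \<tau> {b. b < length u \<and> \<tau> b < p} {..<p}"
      using permutes_inj_on[OF \<tau>] by (auto intro: bij_betw_imageI)
  qed
  finally show ?thesis .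
qed

lemma qsym_word_eq_sum_permutes:
  "qsym_word g \<chi> u w =
     (\<Sum>\<sigma> | \<sigma> permutes {..<length u}.
        if permute_list (inv \<sigma>) u = w then braid_weight g \<chi> u \<sigma> else 0)"
  unfolding qsym_word_def permute_list_def braid_weight_def inversions_def ..

lemma qsym_word_Nil: "qsym_word g \<chi> [] w = (if w = [] then 1 else 0)"
  by (simp add: qsym_word_eq_sum_permutes permutes_empty braid_weight_def inversions_def)

lemma qsym_word_Cons:
  "qsym_word g \<chi> (x # u) w =
     (\<Sum>p\<le>length u. if p < length w \<and> w ! p = x
        then (\<Prod>k<p. \<chi> (w ! k) (g x)) * qsym_word g \<chi> u (del_nth p w) else 0)"
proof -
  have "qsym_word g \<chi> (x # u) w =
      (\<Sum>p\<le>length u. \<Sum>\<tau> | \<tau> permutes {..<length u}.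
        if permute_list (inv (perm_cons (length u) p \<tau>)) (x # u) = w
        then braid_weight g \<chi> (x # u) (perm_cons (length u) p \<tau>) else 0)"
    unfolding qsym_word_eq_sum_permutes length_Cons sum_permutes_Suc ..
  also have "\<dots> = (\<Sum>p\<le>length u. if p < length w \<and> w ! p = x
      then (\<Prod>k<p. \<chi> (w ! k) (g x)) * qsym_word g \<chi> u (del_nth p w) else 0)"
  proof (intro sum.cong refl)
    fix p assume p: "p \<in> {..length u}"
    show "(\<Sum>\<tau> | \<tau> permutes {..<length u}.
        if permute_list (inv (perm_cons (length u) p \<tau>)) (x # u) = w
        then braid_weight g \<chi> (x # u) (perm_cons (length u) p \<tau>) else 0) =
      (if p < length w \<and> w ! p = x
       then (\<Prod>k<p. \<chi> (w ! k) (g x)) * qsym_word g \<chi> u (del_nth p w) else 0)"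
    proof (cases "p < length w \<and> w ! p = x")
      case True
      have "(\<Sum>\<tau> | \<tau> permutes {..<length u}.
          if permute_list (inv (perm_cons (length u) p \<tau>)) (x # u) = w
          then braid_weight g \<chi> (x # u) (perm_cons (length u) p \<tau>) else 0) =
        (\<Sum>\<tau> | \<tau> permutes {..<length u}. (\<Prod>k<p. \<chi> (w ! k) (g x)) *
          (if permute_list (inv \<tau>) u = del_nth p w then braid_weight g \<chi> u \<tau> else 0))"
        using p True
        by (intro sum.cong refl) (auto simp: permute_list_perm_cons_eq_iff braid_weight_perm_cons
            prod_perm_cons_prefix[where F = "\<lambda>z. \<chi> z (g x)"])
      then show ?thesis
        using True by (simp add: qsym_word_eq_sum_permutes sum_distrib_left)
    next
      case False
      then show ?thesis
        using p by (auto simp: permute_list_perm_cons_eq_iff intro!: sum.neutral)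
    qed
  qed
  finally show ?thesis .
qed

lemma qsym_word_eq_0:
  assumes "mset u \<noteq> mset w"
  shows "qsym_word g \<chi> u w = 0"
proof -
  have "permute_list (inv \<sigma>) u \<noteq> w" if "\<sigma> permutes {..<length u}" for \<sigma>
    using assms mset_permute_list[OF permutes_inv[OF that]] by (metis atLeast0LessThan)
  then show ?thesis
    unfolding qsym_word_eq_sum_permutes by (auto intro: sum.neutral)
qed

definition qint :: "'k::field \<Rightarrow> nat \<Rightarrow> 'k" where
  "qint c n = (\<Sum>j<n. c ^ j)"

definition qfact :: "'k::field \<Rightarrow> nat \<Rightarrow> 'k" where
  "qfact c n = (\<Prod>m = 1..n. qint c m)"

definition qfact_mset :: "(nat \<Rightarrow> 'g) \<Rightarrow> (nat \<Rightarrow> 'g \<Rightarrow> 'k::field) \<Rightarrow> nat multiset \<Rightarrow> 'k" where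
  "qfact_mset g \<chi> M = (\<Prod>y\<in>set_mset M. qfact (\<chi> y (g y)) (count M y))"

lemma qint_Suc: "qint c (Suc n) = 1 + c * qint c n"
  unfolding qint_def by (simp add: sum.lessThan_Suc_shift sum_distrib_left del: sum.lessThan_Suc)

lemma qfact_Suc: "qfact c (Suc n) = qint c (Suc n) * qfact c n"
  unfolding qfact_def by (simp add: prod.cl_ivl_Suc)

lemma qfact_mset_add_mset:
  "qfact_mset g \<chi> (add_mset x M) = qint (\<chi> x (g x)) (Suc (count M x)) * qfact_mset g \<chi> M"
proof -
  let ?F = "\<lambda>N y. qfact (\<chi> y (g y)) (count N y)"
  have M: "qfact_mset g \<chi> M = (\<Prod>y\<in>insert x (set_mset M). ?F M y)"
    by (cases "x \<in># M") (auto simp: qfact_mset_def insert_absorb qfact_def)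
  have "qfact_mset g \<chi> (add_mset x M) = ?F (add_mset x M) x * (\<Prod>y\<in>set_mset M - {x}. ?F M y)"
    unfolding qfact_mset_def set_mset_add_mset_insert
    by (subst prod.insert_remove) (auto intro!: prod.cong)
  also have "\<dots> = qint (\<chi> x (g x)) (Suc (count M x)) * (?F M x * (\<Prod>y\<in>set_mset M - {x}. ?F M y))"
    by (simp add: qfact_Suc)
  also have "?F M x * (\<Prod>y\<in>set_mset M - {x}. ?F M y) = qfact_mset g \<chi> M"
    unfolding M by (simp add: prod.insert_remove)
  finally show ?thesis .
qed

text \<open>In a weakly decreasing word the letters before the first x are exactly those > x, and
  the occurrences of x contribute a geometric sum.\<close>

lemma sum_positions_rev_sorted:
  "sorted_wrt (\<ge>) w \<Longrightarrow>
   (\<Sum>p<length w. if w ! p = x then (\<Prod>k<p. \<chi> (w ! k) (g x)) else 0) =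
     ascent_left g \<chi> x (mset w) * qint (\<chi> x (g x)) (count (mset w) x)"
proof (induction w)
  case Nil
  then show ?case by (simp add: qint_def)
next
  case (Cons y w)
  have le: "\<forall>z\<in>set w. z \<le> y" and sw: "sorted_wrt (\<ge>) w"
    using Cons.prems by auto
  have prod_Suc: "(\<Prod>k<Suc i. \<chi> ((y # w) ! k) (g x)) = \<chi> y (g x) * (\<Prod>k<i. \<chi> (w ! k) (g x))" for i
    by (simp only: prod.lessThan_Suc_shift nth_Cons_0 nth_Cons_Suc)
  have "(\<Sum>p<length (y # w). if (y # w) ! p = x then (\<Prod>k<p. \<chi> ((y # w) ! k) (g x)) else 0) =
      (if y = x then 1 else 0) +
      (\<Sum>p<length w. if w ! p = x then \<chi> y (g x) * (\<Prod>k<p. \<chi> (w ! k) (g x)) else 0)"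
    by (simp only: length_Cons sum.lessThan_Suc_shift nth_Cons_0 nth_Cons_Suc prod_Suc lessThan_0
        prod.empty)
  also have "\<dots> = (if y = x then 1 else 0) +
      \<chi> y (g x) * (\<Sum>p<length w. if w ! p = x then (\<Prod>k<p. \<chi> (w ! k) (g x)) else 0)"
    by (simp add: sum_distrib_left if_distrib cong: if_cong)
  also have "\<dots> = (if y = x then 1 else 0) +
      \<chi> y (g x) * (ascent_left g \<chi> x (mset w) * qint (\<chi> x (g x)) (count (mset w) x))"
    unfolding Cons.IH[OF sw] ..
  also have "\<dots> = ascent_left g \<chi> x (mset (y # w)) * qint (\<chi> x (g x)) (count (mset (y # w)) x)"
  proof (cases y x rule: linorder_cases)
    case less
    then have "count (mset w) x = 0" using le by auto
    then show ?thesis using less by (simp add: qint_def del: count_mset_0_iff)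
  next
    case equal
    have empty: "{#z \<in># mset w. x < z#} = {#}" using le equal by auto
    show ?thesis using equal by (simp add: ascent_left_def empty qint_Suc)
  next
    case greater
    then show ?thesis by (simp add: ascent_left_def)
  qed
  finally show ?case .
qed

lemma qsym_word_rev_sorted:
  "sorted_wrt (\<ge>) w \<Longrightarrow> mset w = mset u \<Longrightarrow>
     qsym_word g \<chi> u w = ascent_weight g \<chi> u * qfact_mset g \<chi> (mset u)"
proof (induction u arbitrary: w)
  case Nil
  then show ?case by (simp add: qsym_word_Nil qfact_mset_def)
next
  case (Cons x u)
  have len: "length w = Suc (length u)"
    using Cons.prems(2) by (metis length_Cons size_mset)
  have "qsym_word g \<chi> (x # u) w =
      (\<Sum>p<length w. (if w ! p = x then (\<Prod>k<p. \<chi> (w ! k) (g x)) else 0) *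
        (ascent_weight g \<chi> u * qfact_mset g \<chi> (mset u)))"
    unfolding qsym_word_Cons
  proof (rule sum.cong)
    fix p assume p: "p \<in> {..<length w}"
    show "(if p < length w \<and> w ! p = x
        then (\<Prod>k<p. \<chi> (w ! k) (g x)) * qsym_word g \<chi> u (del_nth p w) else 0) =
      (if w ! p = x then (\<Prod>k<p. \<chi> (w ! k) (g x)) else 0) *
        (ascent_weight g \<chi> u * qfact_mset g \<chi> (mset u))"
    proof (cases "w ! p = x")
      case True
      then have "mset (del_nth p w) = mset u"
        using mset_del_nth[of p w] p Cons.prems(2) by auto
      then have "qsym_word g \<chi> u (del_nth p w) = ascent_weight g \<chi> u * qfact_mset g \<chi> (mset u)"
        using Cons.IH Cons.prems(1) sorted_wrt_del_nth by blast
      then show ?thesis using True p by simp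
    qed (use p in simp)
  qed (use len in auto)
  also have "\<dots> = ascent_left g \<chi> x (mset w) * qint (\<chi> x (g x)) (count (mset w) x) *
      (ascent_weight g \<chi> u * qfact_mset g \<chi> (mset u))"
    by (simp only: sum_distrib_right[symmetric] sum_positions_rev_sorted[OF Cons.prems(1)])
  also have "\<dots> = ascent_weight g \<chi> (x # u) * qfact_mset g \<chi> (mset (x # u))"
    using Cons.prems(2) by (simp add: qfact_mset_add_mset ascent_left_def)
  finally show ?case .
qed

lemma qint_nonzero:
  assumes m0: "0 < m" and m: "m < mord c"
  shows "qint c m \<noteq> 0"
proof -
  have "\<exists>n>0. c ^ n = 1" using m by (auto simp: mord_def split: if_splits)
  then have "mord c = (LEAST n. n > 0 \<and> c ^ n = 1)" by (simp add: mord_def)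
  then have cm: "c ^ m \<noteq> 1"
    using m m0 not_less_Least by auto
  show ?thesis
  proof (cases "c = 1")
    case True
    then show ?thesis using cm by simp
  next
    case False
    then show ?thesis using cm by (simp add: qint_def geometric_sum)
  qed
qed

lemma qfact_nonzero:
  assumes "n < mord c"
  shows "qfact c n \<noteq> 0"
proof -
  have "qint c m \<noteq> 0" if "m \<in> {1..n}" for m
    using that assms by (intro qint_nonzero) auto
  then show ?thesis by (simp add: qfact_def)
qed

lemma qfact_mset_eq_0_imp: "qfact_mset g \<chi> M = 0 \<Longrightarrow> \<exists>y\<in>#M. mord (\<chi> y (g y)) \<le> count M y"
  by (auto simp: qfact_mset_def) (meson not_le qfact_nonzero)

section \<open>The Nichols ideal\<close>

definition homogeneous_part :: "nat multiset \<Rightarrow> ('k::field) ncpoly \<Rightarrow> 'k ncpoly" where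
  "homogeneous_part M f = (\<lambda>w. if mset w = M then f w else 0)"

lemma homogeneous_homogeneous_part: "homogeneous M (homogeneous_part M f)"
  by (simp add: homogeneous_def homogeneous_part_def)

lemma sum_homogeneous_parts:
  assumes "finite {w. f w \<noteq> 0}"
  shows "f = (\<lambda>w. \<Sum>M\<in>mset ` {w. f w \<noteq> 0}. homogeneous_part M f w)"
proof
  fix w
  have "(\<Sum>M\<in>mset ` {w. f w \<noteq> 0}. homogeneous_part M f w) =
      (\<Sum>M\<in>mset ` {w. f w \<noteq> 0}. if M = mset w then f w else 0)"
    unfolding homogeneous_part_def by (rule sum.cong) auto
  also have "\<dots> = f w"
    using assms by (subst sum.delta) auto
  finally show "f w = (\<Sum>M\<in>mset ` {w. f w \<noteq> 0}. homogeneous_part M f w)" ..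
qed

lemma qsym_rev_sorted:
  assumes f: "finite {w. f w \<noteq> 0}"
  shows "qsym g \<chi> f (rev (sorted_list_of_multiset M)) =
    qfact_mset g \<chi> M * ascent_functional g \<chi> M (homogeneous_part M f)"
proof -
  let ?w = "rev (sorted_list_of_multiset M)" and ?supp = "{w. f w \<noteq> 0}"
  have "qsym g \<chi> f ?w = (\<Sum>u\<in>?supp. f u * qsym_word g \<chi> u ?w)"
    by (simp add: qsym_def)
  also have "\<dots> = (\<Sum>u\<in>?supp.
      if mset u = M then qfact_mset g \<chi> M * (f u * ascent_weight g \<chi> u) else 0)"
    by (intro sum.cong refl)
      (auto simp: qsym_word_rev_sorted sorted_wrt_rev qsym_word_eq_0)
  also have "\<dots> = qfact_mset g \<chi> M * (\<Sum>u\<in>?supp. if mset u = M then f u * ascent_weight g \<chi> u else 0)"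
    by (simp add: sum_distrib_left if_distrib cong: if_cong)
  also have "(\<Sum>u\<in>?supp. if mset u = M then f u * ascent_weight g \<chi> u else 0) =
      (\<Sum>u\<in>{u \<in> ?supp. mset u = M}. f u * ascent_weight g \<chi> u)"
    by (rule sum.inter_filter[OF f, symmetric])
  also have "(\<Sum>u\<in>{u \<in> ?supp. mset u = M}. f u * ascent_weight g \<chi> u) =
      ascent_functional g \<chi> M (homogeneous_part M f)"
    unfolding ascent_functional_def homogeneous_part_def
    by (rule sum.mono_neutral_cong_left[OF finite_permutations_of_multiset])
      (auto simp: permutations_of_multiset_def)
  finally show ?thesis .
qed

context Sord_ideal
begin

lemma mon_sorted_mem_ideal:
  assumes S: "sord_rels \<theta> g \<chi> \<subseteq> S" and y: "y < \<theta>" and M: "set_mset M \<subseteq> {..<\<theta>}"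
    and count: "mord (\<chi> y (g y)) \<le> count M y"
  shows "mon (sorted_list_of_multiset M) \<in> ideal_gen \<theta> S"
proof -
  define N where "N = mord (\<chi> y (g y))"
  define r where "r = sorted_list_of_multiset (M - replicate_mset N y)"
  define u where "u = replicate N y @ r"
  have mset_u: "mset u = M"
    using count unfolding u_def r_def N_def
    by (simp add: subset_mset.add_diff_inverse count_le_replicate_mset_subset_eq)
  have "\<forall>x. x \<in># M - replicate_mset N y \<longrightarrow> x < \<theta>"
    using M by (blast dest: in_diffD)
  then have r: "r \<in> lists {..<\<theta>}"
    unfolding r_def by auto
  have u: "u \<in> lists {..<\<theta>}"
    using mset_u M by (auto simp flip: set_mset_mset)
  have "mon (replicate N y) \<in> S"
    using S y unfolding sord_rels_def N_def by blast
  then have "mon u \<in> ideal_gen \<theta> S"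
    unfolding u_def mon_ncmult_mon[symmetric] using r by (intro ideal_gen.rmult ideal_gen.gen)
  then have "nmon g \<chi> u \<in> ideal_gen \<theta> S"
    unfolding nmon_def by (rule ideal_gen.scale)
  moreover have "cong (nmon g \<chi> (sorted_list_of_multiset M)) (nmon g \<chi> u)"
    unfolding mset_u[symmetric] sorted_list_of_multiset_mset
    by (rule ideal_cong_sym[OF nmon_sort[OF u]])
  ultimately have "nmon g \<chi> (sorted_list_of_multiset M) \<in> ideal_gen \<theta> S"
    by (rule ideal_cong_mem[rotated])
  then have "ncscale (ascent_weight g \<chi> (sorted_list_of_multiset M))
      (nmon g \<chi> (sorted_list_of_multiset M)) \<in> ideal_gen \<theta> S"
    by (rule ideal_gen.scale)
  moreover have "sorted_list_of_multiset M \<in> lists {..<\<theta>}"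
    using M by auto
  ultimately show ?thesis
    by (simp add: nmon_def ncscale_ncscale ascent_weight_nonzero ncscale_one)
qed

lemma nichols_ideal_subset:
  assumes S: "sord_rels \<theta> g \<chi> \<subseteq> S"
  shows "nichols_ideal \<theta> g \<chi> \<subseteq> ideal_gen \<theta> S"
proof
  fix f assume "f \<in> nichols_ideal \<theta> g \<chi>"
  then have fin: "finite {w. f w \<noteq> 0}" and lists: "{w. f w \<noteq> 0} \<subseteq> lists {..<\<theta>}"
    and qsym: "qsym g \<chi> f = (\<lambda>w. 0)"
    unfolding nichols_ideal_def TV_def by auto
  have "homogeneous_part M f \<in> ideal_gen \<theta> S" if "M \<in> mset ` {w. f w \<noteq> 0}" for M
  proof (rule homogeneous_mem_ideal[OF homogeneous_homogeneous_part])
    show M: "set_mset M \<subseteq> {..<\<theta>}"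
      using that lists by (auto simp flip: set_mset_mset)
    have "qfact_mset g \<chi> M * ascent_functional g \<chi> M (homogeneous_part M f) = 0"
      using qsym_rev_sorted[OF fin] qsym by metis
    then have "qfact_mset g \<chi> M = 0 \<or> ascent_functional g \<chi> M (homogeneous_part M f) = 0"
      by simp
    then show "ascent_functional g \<chi> M (homogeneous_part M f) = 0 \<or>
        mon (sorted_list_of_multiset M) \<in> ideal_gen \<theta> S"
      using qfact_mset_eq_0_imp M mon_sorted_mem_ideal[OF S] by blast
  qed
  then show "f \<in> ideal_gen \<theta> S"
    by (subst sum_homogeneous_parts[OF fin]) (intro ideal_gen_sum finite_imageI fin)
qed

end

lemma character_nonzero:
  fixes \<chi> :: "'g::group_add \<Rightarrow> 'k::field"
  assumes hom: "\<And>x y. \<chi> (x + y) = \<chi> x * \<chi> y" and unit: "\<chi> 0 = 1"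
  shows "\<chi> x \<noteq> 0"
  using hom[of x "- x"] unit by auto

theorem lemma4p8:
  fixes \<theta> :: nat
    and g :: "nat \<Rightarrow> 'g::{finite, ab_group_add}"
    and \<chi> :: "nat \<Rightarrow> 'g \<Rightarrow> 'k::field_char_0"
    and a :: "nat \<Rightarrow> nat \<Rightarrow> int"
  assumes chars: "\<And>j x y. j < \<theta> \<Longrightarrow> \<chi> j (x + y) = \<chi> j x * \<chi> j y"
      and chars0: "\<And>j. j < \<theta> \<Longrightarrow> \<chi> j 0 = 1"
      and fct: "finite_cartan_type \<theta> g \<chi> a"
      and odd_ord: "\<And>i. i < \<theta> \<Longrightarrow> odd (mord (\<chi> i (g i)))"
      and G2: "\<And>i. i < \<theta> \<Longrightarrow> in_G2_component \<theta> a i \<Longrightarrow> coprime (mord (\<chi> i (g i))) 3"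
      and blocks: "block_diagonal \<theta> a"
      and dynkin: "finite_type_cartan_matrix \<theta> a"
  shows "ideal_gen \<theta> (Rpre_rels \<theta> g \<chi> a) \<subseteq> ideal_gen \<theta> (Sord_rels \<theta> g \<chi>)
         \<and> nichols_ideal \<theta> g \<chi> \<subseteq> ideal_gen \<theta> (sord_rels \<theta> g \<chi>)"
proof -
  have nonzero: "\<chi> b x \<noteq> 0" if "b < \<theta>" for b x
    using character_nonzero[of "\<chi> b"] chars[OF that] chars0[OF that] by blast
  interpret Sord: Sord_ideal \<theta> g \<chi> "Sord_rels \<theta> g \<chi>"
    by unfold_locales (simp_all add: nonzero)
  interpret sord: Sord_ideal \<theta> g \<chi> "sord_rels \<theta> g \<chi>"
    by unfold_locales (auto simp: nonzero sord_rels_def)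
  have cartan: "cartan_type \<theta> g \<chi> a"
    using fct by (simp add: finite_cartan_type_def)
  have "Rpre_rels \<theta> g \<chi> a \<subseteq> ideal_gen \<theta> (Sord_rels \<theta> g \<chi>)"
  proof
    fix r assume "r \<in> Rpre_rels \<theta> g \<chi> a"
    then obtain i j where r: "r = (ad_sk g \<chi> i ^^ nat (1 - a i j)) (X j)"
      and ij: "i < \<theta>" "j < \<theta>" "i \<noteq> j"
      unfolding Rpre_rels_def by blast
    then have "a i j \<le> 0" and "\<chi> j (g i) * \<chi> i (g j) = \<chi> i (g i) powi a i j"
      using cartan unfolding cartan_type_def by auto
    then show "r \<in> ideal_gen \<theta> (Sord_rels \<theta> g \<chi>)"
      unfolding r using ij by (intro Sord.Serre_relation_mem_ideal)
  qed
  then show ?thesis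
    using ideal_gen_minimal sord.nichols_ideal_subset[OF subset_refl] by blast
qed

end
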